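(* Let $\gamma\in(0,1)$. There is a constant $c_1>0$, a polynomial in $\|D_x\|_\infty,\|D_u\|_\infty,\kappa,\kappa_B,\gamma^{-1},\bar w$ (independent of $n,m,H,t$), such that with $\epsilon_1(H)=c_1n\sqrt mH(1-\gamma)^H$ the following holds. Suppose the disturbance-action policy is implemented with time-varying parameters $\bm M_k\in\mathcal M$ for all $k$, and $H\ge\frac{\log(2\kappa^2)}{\log((1-\gamma)^{-1})}$. Then for every $t$, $$\max_{\|w_k\|_\infty\le\bar w}\|D_xA_{\mathbb K}^Hx_{t-H}\|_\infty\le\epsilon_1(H),\qquad\max_{\|w_k\|_\infty\le\bar w}\|D_u\mathbb KA_{\mathbb K}^Hx_{t-H}\|_\infty\le\epsilon_1(H),$$ where the maxima are over all disturbance sequences with $\|w_k\|_\infty\le\bar w$ for all $k$.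
   Context: System $x_{t+1}=Ax_t+Bu_t+w_t$, $A\in\mathbb R^{n\times n}$, $B\in\mathbb R^{n\times m}$, $x_0=0$, and $x_s=0$ for $s<0$. $D_x\in\mathbb R^{k_x\times n}$, $D_u\in\mathbb R^{k_u\times m}$; for matrices $\|\cdot\|_\infty$ is the max absolute row sum and $\|\cdot\|_2$ the spectral norm. $\bar w>0$. For $\kappa\ge1$, $\gamma\in(0,1]$, $K$ is $(\kappa,\gamma)$-strongly stable if $A-BK=Q^{-1}LQ$ with $\|L\|_2\le1-\gamma$ and $\max(\|Q\|_2,\|Q^{-1}\|_2,\|K\|_2)\le\kappa$. $\kappa_B=\max(\|B\|_2,1)$. Fix a $(\kappa,\gamma)$-strongly stable $\mathbb K$ and set $A_{\mathbb K}=A-B\mathbb K$. A parameter is a list $\bm M=(M^{[1]},\dots,M^{[H]})$, $M^{[i]}\in\mathbb R^{m\times n}$; implementing parameters $\bm M_t$ means $u_t=-\mathbb Kx_t+\sum_{i=1}^HM_t^{[i]}w_{t-i}$, with $w_s=0$ for $s<0$. $\mathcal M=\{\bm M:\|M^{[i]}\|_\infty\le2\sqrt n\kappa^3(1-\gamma)^{i-1},\ 1\le i\le H\}$. *)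

theory Defs
  imports Complex_Main
begin

text \<open>Matrices and vectors with explicit dimensions (dimensions vary inside the
statement, since the constant must be independent of n and m).
A matrix with r rows and c columns is a function nat => nat => real, only the
entries with indices i < r, j < c are relevant; a vector of length c is nat => real.\<close>

type_synonym mat = "nat \<Rightarrow> nat \<Rightarrow> real"
type_synonym vec = "nat \<Rightarrow> real"

definition mv :: "nat \<Rightarrow> mat \<Rightarrow> vec \<Rightarrow> vec" where
  "mv c A v = (\<lambda>i. \<Sum>j<c. A i j * v j)"

definition mm :: "nat \<Rightarrow> mat \<Rightarrow> mat \<Rightarrow> mat" where
  "mm c A B = (\<lambda>i k. \<Sum>j<c. A i j * B j k)"

definition idm :: mat where
  "idm = (\<lambda>i j. if i = j then 1 else 0)"

primrec mpow :: "nat \<Rightarrow> mat \<Rightarrow> nat \<Rightarrow> mat" where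
  "mpow n A 0 = idm"
| "mpow n A (Suc k) = mm n A (mpow n A k)"

definition vnorm_inf :: "nat \<Rightarrow> vec \<Rightarrow> real" where
  "vnorm_inf r v = Max (insert 0 ((\<lambda>i. \<bar>v i\<bar>) ` {..<r}))"

definition mnorm_inf :: "nat \<Rightarrow> nat \<Rightarrow> mat \<Rightarrow> real" where
  "mnorm_inf r c A = Max (insert 0 ((\<lambda>i. \<Sum>j<c. \<bar>A i j\<bar>) ` {..<r}))"

definition vnorm2 :: "nat \<Rightarrow> vec \<Rightarrow> real" where
  "vnorm2 c v = sqrt (\<Sum>j<c. (v j)\<^sup>2)"

definition mnorm2 :: "nat \<Rightarrow> nat \<Rightarrow> mat \<Rightarrow> real" where
  "mnorm2 r c A = Sup {vnorm2 r (mv c A v) | v. vnorm2 c v \<le> 1}"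

definition strongly_stable :: "nat \<Rightarrow> nat \<Rightarrow> mat \<Rightarrow> mat \<Rightarrow> mat \<Rightarrow> real \<Rightarrow> real \<Rightarrow> bool" where
  "strongly_stable n m A B K \<kappa> \<gamma> \<longleftrightarrow> 1 \<le> \<kappa> \<and> 0 < \<gamma> \<and> \<gamma> \<le> 1 \<and>
     (\<exists>Q Qi L.
        (\<forall>i<n. \<forall>j<n. mm n Q Qi i j = idm i j \<and> mm n Qi Q i j = idm i j) \<and>
        (\<forall>i<n. \<forall>j<n. A i j - mm m B K i j = mm n (mm n Qi L) Q i j) \<and>
        mnorm2 n n L \<le> 1 - \<gamma> \<and> mnorm2 n n Q \<le> \<kappa> \<and> mnorm2 n n Qi \<le> \<kappa> \<and>
        mnorm2 m n K \<le> \<kappa>)"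

definition AK :: "nat \<Rightarrow> mat \<Rightarrow> mat \<Rightarrow> mat \<Rightarrow> mat" where
  "AK m A B K = (\<lambda>i j. A i j - mm m B K i j)"

text \<open>State trajectory of the disturbance-action policy with time-varying parameters:
 M t i is M_t^[i] (i = 1..H), w t is the disturbance w_t (w_s = 0 for s < 0),
 x_0 = 0, u_t = -K x_t + sum_{i=1}^H M_t^[i] w_{t-i}, x_{t+1} = A x_t + B u_t + w_t.\<close>
definition dap_input :: "nat \<Rightarrow> nat \<Rightarrow> mat \<Rightarrow> nat \<Rightarrow> (nat \<Rightarrow> nat \<Rightarrow> mat) \<Rightarrow> (nat \<Rightarrow> vec)
    \<Rightarrow> nat \<Rightarrow> vec \<Rightarrow> vec" where
  "dap_input n m K H M w t x =
     (\<lambda>r. - mv n K x r + (\<Sum>i\<in>{1..H}. if i \<le> t then mv n (M t i) (w (t - i)) r else 0))"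

primrec dap_state :: "nat \<Rightarrow> nat \<Rightarrow> mat \<Rightarrow> mat \<Rightarrow> mat \<Rightarrow> nat \<Rightarrow> (nat \<Rightarrow> nat \<Rightarrow> mat)
    \<Rightarrow> (nat \<Rightarrow> vec) \<Rightarrow> nat \<Rightarrow> vec" where
  "dap_state n m A B K H M w 0 = (\<lambda>_. 0)"
| "dap_state n m A B K H M w (Suc t) =
     (\<lambda>r. mv n A (dap_state n m A B K H M w t) r
          + mv m B (dap_input n m K H M w t (dap_state n m A B K H M w t)) r + w t r)"

definition state_shift :: "nat \<Rightarrow> nat \<Rightarrow> mat \<Rightarrow> mat \<Rightarrow> mat \<Rightarrow> nat \<Rightarrow> (nat \<Rightarrow> nat \<Rightarrow> mat)
    \<Rightarrow> (nat \<Rightarrow> vec) \<Rightarrow> nat \<Rightarrow> vec" where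
  "state_shift n m A B K H M w t =
     (if H \<le> t then dap_state n m A B K H M w (t - H) else (\<lambda>_. 0))"

definition param_set :: "nat \<Rightarrow> nat \<Rightarrow> nat \<Rightarrow> real \<Rightarrow> real \<Rightarrow> (nat \<Rightarrow> mat) set" where
  "param_set n m H \<kappa> \<gamma> = {Ms. \<forall>i\<in>{1..H}.
      mnorm_inf m n (Ms i) \<le> 2 * sqrt (real n) * \<kappa>^3 * (1 - \<gamma>)^(i - 1)}"

definition is_poly6 :: "(real \<Rightarrow> real \<Rightarrow> real \<Rightarrow> real \<Rightarrow> real \<Rightarrow> real \<Rightarrow> real) \<Rightarrow> bool" where
  "is_poly6 P \<longleftrightarrow> (\<exists>(E :: (nat \<times> nat \<times> nat \<times> nat \<times> nat \<times> nat) set) coef. finite E \<and>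
     (\<forall>x1 x2 x3 x4 x5 x6. P x1 x2 x3 x4 x5 x6 =
        (\<Sum>(e1,e2,e3,e4,e5,e6)\<in>E. coef (e1,e2,e3,e4,e5,e6) *
            x1^e1 * x2^e2 * x3^e3 * x4^e4 * x5^e5 * x6^e6)))"

end

theory Submission
  imports Defs "HOL-Analysis.L2_Norm"
begin

text \<open>Write the strongly stable closed loop as \<open>A\<^sub>K = Q\<^sup>-\<^sup>1 L Q\<close>. In the coordinates
\<open>z = Q x\<close> each closed-loop step contracts the Euclidean norm by \<open>1 - \<gamma>\<close>, while the
remaining input \<open>B \<Sum>\<^sub>i M\<^sup>[\<^sup>i\<^sup>] w\<^sub>t\<^sub>-\<^sub>i + w\<^sub>t\<close> has Euclidean norm \<open>O(n \<surd>m)\<close> because the admissible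
parameter norms decay geometrically. Hence \<open>\<parallel>Q x\<^sub>t\<parallel>\<^sub>2\<close> stays below \<open>\<kappa>/\<gamma>\<close> times that bound
for all \<open>t\<close>, and \<open>H\<close> further closed-loop steps shrink it by \<open>(1 - \<gamma>)\<^sup>H\<close>. The infinity
norms of the two outputs are finally bounded through the Euclidean norm.\<close>

lemma vnorm2_eq_L2_set: "vnorm2 c v = L2_set v {..<c}"
  by (simp add: vnorm2_def L2_set_def)

lemma vnorm2_nonneg: "0 \<le> vnorm2 c v"
  by (simp add: vnorm2_eq_L2_set)

lemma vnorm2_cong: "(\<And>i. i < c \<Longrightarrow> v i = v' i) \<Longrightarrow> vnorm2 c v = vnorm2 c v'"
  unfolding vnorm2_def by (intro arg_cong[where f=sqrt] sum.cong) auto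

lemma vnorm2_zero [simp]: "vnorm2 c (\<lambda>_. 0) = 0"
  by (simp add: vnorm2_def)

lemma vnorm2_scale: "vnorm2 c (\<lambda>i. a * v i) = \<bar>a\<bar> * vnorm2 c v"
  unfolding vnorm2_def
  by (simp add: power_mult_distrib real_sqrt_mult sum_distrib_left[symmetric])

lemma vnorm2_add_le: "vnorm2 c (\<lambda>i. u i + v i) \<le> vnorm2 c u + vnorm2 c v"
  unfolding vnorm2_eq_L2_set by (rule L2_set_triangle_ineq)

lemma vnorm2_le_sqrt_mult:
  assumes "0 \<le> a" "\<And>i. i < c \<Longrightarrow> \<bar>v i\<bar> \<le> a"
  shows "vnorm2 c v \<le> sqrt (real c) * a"
proof -
  have "L2_set (\<lambda>i. \<bar>v i\<bar>) {..<c} \<le> L2_set (\<lambda>_. a) {..<c}"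
    using assms by (intro L2_set_mono) auto
  then show ?thesis
    using \<open>0 \<le> a\<close> by (simp add: vnorm2_eq_L2_set L2_set_constant L2_set_def)
qed

lemma vnorm_inf_ge: "i < c \<Longrightarrow> \<bar>v i\<bar> \<le> vnorm_inf c v"
  unfolding vnorm_inf_def by (intro Max_ge) auto

lemma vnorm_inf_nonneg: "0 \<le> vnorm_inf c v"
  unfolding vnorm_inf_def by (intro Max_ge) auto

lemma vnorm_inf_leI: "0 \<le> a \<Longrightarrow> (\<And>i. i < c \<Longrightarrow> \<bar>v i\<bar> \<le> a) \<Longrightarrow> vnorm_inf c v \<le> a"
  unfolding vnorm_inf_def by (subst Max_le_iff) auto

lemma vnorm_inf_le_vnorm2: "vnorm_inf c v \<le> vnorm2 c v"
proof (rule vnorm_inf_leI[OF vnorm2_nonneg])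
  fix i assume "i < c"
  then have "\<bar>v i\<bar> \<le> L2_set (\<lambda>i. \<bar>v i\<bar>) {..<c}"
    by (intro member_le_L2_set) auto
  then show "\<bar>v i\<bar> \<le> vnorm2 c v"
    by (simp add: vnorm2_eq_L2_set L2_set_def)
qed

lemma mnorm_inf_ge: "i < r \<Longrightarrow> (\<Sum>j<c. \<bar>A i j\<bar>) \<le> mnorm_inf r c A"
  unfolding mnorm_inf_def by (intro Max_ge) auto

lemma mnorm_inf_nonneg: "0 \<le> mnorm_inf r c A"
  unfolding mnorm_inf_def by (intro Max_ge) auto

lemma mv_cong: "(\<And>j. j < c \<Longrightarrow> v j = v' j) \<Longrightarrow> mv c A v = mv c A v'"
  unfolding mv_def by (intro ext sum.cong) auto

lemma mv_cong_row: "(\<And>j. j < c \<Longrightarrow> A i j = A' i j) \<Longrightarrow> mv c A v i = mv c A' v i"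
  unfolding mv_def by (intro sum.cong) auto

lemma mv_zero [simp]: "mv c A (\<lambda>_. 0) = (\<lambda>_. 0)"
  by (simp add: mv_def)

lemma mv_idm: "i < c \<Longrightarrow> mv c idm v i = v i"
  unfolding mv_def idm_def by (simp add: if_distrib[where f="\<lambda>a. a * _"] cong: if_cong)

lemma mv_mm: "mv c (mm d X Y) v = mv d X (mv c Y v)"
  unfolding mv_def mm_def
  by (auto intro!: ext simp: sum_distrib_left sum_distrib_right mult.assoc intro: sum.swap)

lemma mv_add: "mv c A (\<lambda>j. u j + v j) = (\<lambda>i. mv c A u i + mv c A v i)"
  unfolding mv_def by (auto simp: sum.distrib algebra_simps)

lemma mv_uminus: "mv c A (\<lambda>j. - v j) = (\<lambda>i. - mv c A v i)"
  unfolding mv_def by (auto simp: sum_negf)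

lemma mv_scale: "mv c A (\<lambda>j. a * v j) = (\<lambda>i. a * mv c A v i)"
  unfolding mv_def by (auto simp: sum_distrib_left algebra_simps)

lemma mv_AK: "mv n (AK m A B K) x i = mv n A x i - mv m B (mv n K x) i"
  unfolding AK_def mv_mm[symmetric] unfolding mv_def by (simp add: sum_subtractf left_diff_distrib)

lemma abs_mv_le_mnorm_inf: "i < r \<Longrightarrow> \<bar>mv c A v i\<bar> \<le> mnorm_inf r c A * vnorm_inf c v"
proof -
  assume "i < r"
  have "\<bar>mv c A v i\<bar> \<le> (\<Sum>j<c. \<bar>A i j\<bar> * vnorm_inf c v)"
    unfolding mv_def by (rule order_trans[OF sum_abs])
      (auto simp: abs_mult intro!: sum_mono mult_left_mono vnorm_inf_ge)
  also have "\<dots> \<le> mnorm_inf r c A * vnorm_inf c v"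
    using \<open>i < r\<close> by (simp add: sum_distrib_right[symmetric] mult_right_mono mnorm_inf_ge vnorm_inf_nonneg)
  finally show ?thesis .
qed

lemma vnorm_inf_mv_le: "vnorm_inf r (mv c A v) \<le> mnorm_inf r c A * vnorm2 c v"
proof -
  have "vnorm_inf r (mv c A v) \<le> mnorm_inf r c A * vnorm_inf c v"
    by (intro vnorm_inf_leI abs_mv_le_mnorm_inf mult_nonneg_nonneg mnorm_inf_nonneg vnorm_inf_nonneg)
  also have "\<dots> \<le> mnorm_inf r c A * vnorm2 c v"
    by (intro mult_left_mono vnorm_inf_le_vnorm2 mnorm_inf_nonneg)
  finally show ?thesis .
qed

lemma vnorm2_mv_le_L2_set: "vnorm2 r (mv c A v) \<le> L2_set (\<lambda>i. L2_set (A i) {..<c}) {..<r} * vnorm2 c v"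
proof -
  have row: "\<bar>mv c A v i\<bar> \<le> L2_set (A i) {..<c} * vnorm2 c v" for i
    unfolding mv_def vnorm2_eq_L2_set
    by (rule order_trans[OF sum_abs]) (simp add: abs_mult L2_set_mult_ineq)
  have "vnorm2 r (mv c A v) = L2_set (\<lambda>i. \<bar>mv c A v i\<bar>) {..<r}"
    by (simp add: vnorm2_eq_L2_set L2_set_def)
  also have "\<dots> \<le> L2_set (\<lambda>i. L2_set (A i) {..<c} * vnorm2 c v) {..<r}"
    using row by (intro L2_set_mono) auto
  also have "\<dots> = L2_set (\<lambda>i. L2_set (A i) {..<c}) {..<r} * vnorm2 c v"
    by (simp add: L2_set_left_distrib vnorm2_nonneg)
  finally show ?thesis .
qed

text \<open>The Frobenius bound makes the set in \<^const>\<open>mnorm2\<close> bounded above, so that its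
supremum is not a junk value.\<close>
lemma vnorm2_mv_le_mnorm2:
  assumes "mnorm2 r c A \<le> a"
  shows "vnorm2 r (mv c A v) \<le> a * vnorm2 c v"
proof (cases "vnorm2 c v = 0")
  case True
  then have "\<forall>j<c. v j = 0"
    by (simp add: vnorm2_eq_L2_set L2_set_eq_0_iff)
  then have "mv c A v = (\<lambda>_. 0)"
    using mv_cong[of c v "\<lambda>_. 0" A] by simp
  then show ?thesis using True by simp
next
  case False
  let ?S = "{vnorm2 r (mv c A u) | u. vnorm2 c u \<le> 1}"
  let ?N = "vnorm2 c v"
  have N: "0 < ?N" using False vnorm2_nonneg[of c v] by linarith
  have "bdd_above ?S"
  proof (rule bdd_aboveI)
    fix x assume "x \<in> ?S"
    then obtain u where "x = vnorm2 r (mv c A u)" "vnorm2 c u \<le> 1" by auto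
    then show "x \<le> L2_set (\<lambda>i. L2_set (A i) {..<c}) {..<r}"
      using vnorm2_mv_le_L2_set[of r c A u] by (simp add: mult_left_le order_trans)
  qed
  moreover have "vnorm2 c (\<lambda>j. (1 / ?N) * v j) = 1"
    using N by (subst vnorm2_scale) simp
  then have "vnorm2 r (mv c A (\<lambda>j. (1 / ?N) * v j)) \<in> ?S"
    by (intro CollectI exI[of _ "\<lambda>j. (1 / ?N) * v j"]) simp
  ultimately have "vnorm2 r (mv c A (\<lambda>j. (1 / ?N) * v j)) \<le> a"
    using assms unfolding mnorm2_def by (meson cSup_upper order_trans)
  moreover have "vnorm2 r (mv c A (\<lambda>j. (1 / ?N) * v j)) = vnorm2 r (mv c A v) / ?N"
    using N by (subst mv_scale, subst vnorm2_scale) simp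
  ultimately show ?thesis
    using N by (simp add: divide_le_eq mult.commute)
qed

lemma sum_power_pred_le:
  fixes q :: real
  assumes "0 \<le> q" "q < 1"
  shows "(\<Sum>i\<in>{1..H}. q ^ (i - 1)) \<le> 1 / (1 - q)"
proof -
  have "(\<Sum>i\<in>{1..H}. q ^ (i - 1)) = (\<Sum>i<H. q ^ i)"
    by (induction H) (auto simp: atLeastAtMostSuc_conv add.commute)
  also have "\<dots> = (1 - q ^ H) / (1 - q)"
    using assms by (simp add: sum_gp_strict)
  also have "\<dots> \<le> 1 / (1 - q)"
    using assms by (intro divide_right_mono) auto
  finally show ?thesis .
qed

lemma le_div_of_contraction:
  fixes s :: "nat \<Rightarrow> real"
  assumes "0 < \<gamma>" "\<gamma> \<le> 1" "s 0 \<le> c / \<gamma>" "\<And>t. s (Suc t) \<le> (1 - \<gamma>) * s t + c"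
  shows "s t \<le> c / \<gamma>"
proof (induction t)
  case (Suc t)
  have "s (Suc t) \<le> (1 - \<gamma>) * (c / \<gamma>) + c"
    using assms(2,4) Suc.IH by (meson add_right_mono diff_ge_0_iff_ge mult_left_mono order_trans)
  also have "\<dots> = c / \<gamma>"
    using assms(1) by (simp add: field_simps)
  finally show ?case .
qed (use assms(3) in simp)

definition disturbance_action :: "nat \<Rightarrow> nat \<Rightarrow> (nat \<Rightarrow> nat \<Rightarrow> mat) \<Rightarrow> (nat \<Rightarrow> vec) \<Rightarrow> nat \<Rightarrow> vec" where
  "disturbance_action n H M w t =
     (\<lambda>r. \<Sum>i\<in>{1..H}. if i \<le> t then mv n (M t i) (w (t - i)) r else 0)"

lemma dap_state_Suc:
  "dap_state n m A B K H M w (Suc t) =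
     (\<lambda>r. mv n (AK m A B K) (dap_state n m A B K H M w t) r
          + (mv m B (disturbance_action n H M w t) r + w t r))"
  unfolding dap_state.simps dap_input_def mv_add mv_uminus mv_AK disturbance_action_def[symmetric]
  by (simp add: algebra_simps)

lemma abs_disturbance_action_le:
  assumes "M t \<in> param_set n m H \<kappa> \<gamma>" "\<forall>k. vnorm_inf n (w k) \<le> wbar" "r < m"
    and "0 \<le> \<kappa>" "0 < \<gamma>" "\<gamma> \<le> 1" "0 \<le> wbar"
  shows "\<bar>disturbance_action n H M w t r\<bar> \<le> 2 * sqrt (real n) * \<kappa>^3 * wbar / \<gamma>"
proof -
  let ?a = "2 * sqrt (real n) * \<kappa>^3 * wbar"
  have summand_le: "\<bar>if i \<le> t then mv n (M t i) (w (t - i)) r else 0\<bar> \<le> ?a * (1 - \<gamma>)^(i - 1)"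
    if "i \<in> {1..H}" for i
  proof -
    have "\<bar>mv n (M t i) (w (t - i)) r\<bar> \<le> mnorm_inf m n (M t i) * vnorm_inf n (w (t - i))"
      using \<open>r < m\<close> by (rule abs_mv_le_mnorm_inf)
    also have "\<dots> \<le> (2 * sqrt (real n) * \<kappa>^3 * (1 - \<gamma>)^(i - 1)) * wbar"
      using assms that by (intro mult_mono) (auto simp: param_set_def vnorm_inf_nonneg)
    finally show ?thesis
      using assms by (simp add: mult_ac)
  qed
  have "\<bar>disturbance_action n H M w t r\<bar> \<le> (\<Sum>i\<in>{1..H}. ?a * (1 - \<gamma>)^(i - 1))"
    unfolding disturbance_action_def by (rule order_trans[OF sum_abs sum_mono[OF summand_le]])
  also have "\<dots> = ?a * (\<Sum>i\<in>{1..H}. (1 - \<gamma>)^(i - 1))"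
    by (simp add: sum_distrib_left)
  also have "\<dots> \<le> ?a * (1 / (1 - (1 - \<gamma>)))"
    using assms by (intro mult_left_mono sum_power_pred_le) auto
  finally show ?thesis by simp
qed

lemma vnorm2_closed_loop_input_le:
  assumes "M t \<in> param_set n m H \<kappa> \<gamma>" "\<forall>k. vnorm_inf n (w k) \<le> wbar"
    and "mnorm2 n m B \<le> \<kappa>\<^sub>B" "1 \<le> \<kappa>\<^sub>B" "1 \<le> \<kappa>" "0 < \<gamma>" "\<gamma> \<le> 1" "0 \<le> wbar" "1 \<le> n" "1 \<le> m"
  shows "vnorm2 n (\<lambda>r. mv m B (disturbance_action n H M w t) r + w t r)
           \<le> 3 * real n * sqrt (real m) * \<kappa>\<^sub>B * \<kappa>^3 * wbar / \<gamma>"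
proof -
  define p where "p = sqrt (real m) * \<kappa>\<^sub>B * \<kappa>^3 / \<gamma>"
  have "1 \<le> sqrt (real m) * \<kappa>\<^sub>B * \<kappa>^3"
    using assms by (simp add: mult_ge1_I one_le_power)
  then have p: "1 \<le> p"
    unfolding p_def using assms(6,7) by (simp add: le_divide_eq)
  have "sqrt (real n) \<le> sqrt (real n ^ 2)"
    using assms by (intro real_sqrt_le_mono) (simp add: power2_eq_square)
  then have sqrt_n: "sqrt (real n) \<le> real n"
    by simp
  have "vnorm2 n (mv m B (disturbance_action n H M w t))
      \<le> \<kappa>\<^sub>B * vnorm2 m (disturbance_action n H M w t)"
    using assms(3) by (rule vnorm2_mv_le_mnorm2)
  also have "\<dots> \<le> \<kappa>\<^sub>B * (sqrt (real m) * (2 * sqrt (real n) * \<kappa>^3 * wbar / \<gamma>))"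
    using assms by (intro mult_left_mono vnorm2_le_sqrt_mult abs_disturbance_action_le) auto
  also have "\<dots> = 2 * sqrt (real n) * p * wbar"
    by (simp add: p_def)
  finally have Bu: "vnorm2 n (mv m B (disturbance_action n H M w t)) \<le> 2 * sqrt (real n) * p * wbar" .
  have "vnorm2 n (w t) \<le> sqrt (real n) * wbar"
    using assms(2,8) by (intro vnorm2_le_sqrt_mult) (auto intro: order_trans[OF vnorm_inf_ge])
  also have "\<dots> \<le> sqrt (real n) * p * wbar"
    using p assms(8) by (intro mult_right_mono) (auto simp: mult_le_cancel_left1)
  finally have w: "vnorm2 n (w t) \<le> sqrt (real n) * p * wbar" .
  have "vnorm2 n (\<lambda>r. mv m B (disturbance_action n H M w t) r + w t r)
      \<le> 3 * sqrt (real n) * p * wbar"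
    using vnorm2_add_le[of n "mv m B (disturbance_action n H M w t)" "w t"] Bu w by linarith
  also have "\<dots> \<le> 3 * real n * p * wbar"
    using sqrt_n p assms(8) by (intro mult_right_mono) auto
  finally show ?thesis
    unfolding p_def by (simp add: mult_ac)
qed

locale strong_stability_certificate =
  fixes n m :: nat and A B K Q Qi L :: mat and \<kappa> \<gamma> :: real
  assumes kappa_ge_1: "1 \<le> \<kappa>" and gamma_pos: "0 < \<gamma>" and gamma_le_1: "\<gamma> \<le> 1"
    and Q_inverse: "\<forall>i<n. \<forall>j<n. mm n Q Qi i j = idm i j \<and> mm n Qi Q i j = idm i j"
    and AK_similar: "\<forall>i<n. \<forall>j<n. A i j - mm m B K i j = mm n (mm n Qi L) Q i j"
    and norm_L: "mnorm2 n n L \<le> 1 - \<gamma>" and norm_Q: "mnorm2 n n Q \<le> \<kappa>"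
    and norm_Qi: "mnorm2 n n Qi \<le> \<kappa>" and norm_K: "mnorm2 m n K \<le> \<kappa>"

lemma strongly_stableE:
  assumes "strongly_stable n m A B K \<kappa> \<gamma>"
  obtains Q Qi L where "strong_stability_certificate n m A B K Q Qi L \<kappa> \<gamma>"
  using assms unfolding strongly_stable_def strong_stability_certificate_def by blast

lemma strongly_stable_kappa_ge_1: "strongly_stable n m A B K \<kappa> \<gamma> \<Longrightarrow> 1 \<le> \<kappa>"
  by (simp add: strongly_stable_def)

context strong_stability_certificate
begin

lemma mv_Q_Qi: "i < n \<Longrightarrow> mv n Q (mv n Qi z) i = z i"
  using Q_inverse mv_cong_row[of n "mm n Q Qi" i idm z]
  by (simp add: mv_mm[symmetric] mv_idm)

lemma mv_Qi_Q: "i < n \<Longrightarrow> mv n Qi (mv n Q z) i = z i"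
  using Q_inverse mv_cong_row[of n "mm n Qi Q" i idm z]
  by (simp add: mv_mm[symmetric] mv_idm)

lemma mv_Q_AK: "i < n \<Longrightarrow> mv n Q (mv n (AK m A B K) y) i = mv n L (mv n Q y) i"
proof -
  assume "i < n"
  have "mv n (AK m A B K) y j = mv n Qi (mv n L (mv n Q y)) j" if "j < n" for j
    using AK_similar that mv_cong_row[of n "AK m A B K" j "mm n (mm n Qi L) Q" y]
    by (simp add: AK_def mv_mm)
  then have "mv n Q (mv n (AK m A B K) y) = mv n Q (mv n Qi (mv n L (mv n Q y)))"
    by (rule mv_cong)
  then show ?thesis
    using \<open>i < n\<close> mv_Q_Qi by simp
qed

lemma vnorm2_Q_AK_le: "vnorm2 n (mv n Q (mv n (AK m A B K) y)) \<le> (1 - \<gamma>) * vnorm2 n (mv n Q y)"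
  using vnorm2_cong[OF mv_Q_AK] vnorm2_mv_le_mnorm2[OF norm_L] by simp

lemma vnorm2_mpow_AK_le:
  "vnorm2 n (mv n (mpow n (AK m A B K) k) x) \<le> \<kappa> * (1 - \<gamma>)^k * vnorm2 n (mv n Q x)"
proof -
  have Q_pow: "vnorm2 n (mv n Q (mv n (mpow n (AK m A B K) k) x)) \<le> (1 - \<gamma>)^k * vnorm2 n (mv n Q x)"
  proof (induction k)
    case 0
    have "mv n Q (mv n idm x) = mv n Q x"
      by (rule mv_cong) (simp add: mv_idm)
    then show ?case by simp
  next
    case (Suc k)
    have "vnorm2 n (mv n Q (mv n (mpow n (AK m A B K) (Suc k)) x))
        \<le> (1 - \<gamma>) * vnorm2 n (mv n Q (mv n (mpow n (AK m A B K) k) x))"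
      by (simp add: mv_mm vnorm2_Q_AK_le)
    also have "\<dots> \<le> (1 - \<gamma>) * ((1 - \<gamma>)^k * vnorm2 n (mv n Q x))"
      using gamma_le_1 Suc.IH by (intro mult_left_mono) auto
    finally show ?case by simp
  qed
  have "vnorm2 n (mv n (mpow n (AK m A B K) k) x)
      = vnorm2 n (mv n Qi (mv n Q (mv n (mpow n (AK m A B K) k) x)))"
    by (rule vnorm2_cong) (simp add: mv_Qi_Q)
  also have "\<dots> \<le> \<kappa> * vnorm2 n (mv n Q (mv n (mpow n (AK m A B K) k) x))"
    by (rule vnorm2_mv_le_mnorm2[OF norm_Qi])
  also have "\<dots> \<le> \<kappa> * ((1 - \<gamma>)^k * vnorm2 n (mv n Q x))"
    using kappa_ge_1 Q_pow by (intro mult_left_mono) auto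
  finally show ?thesis by (simp add: mult.assoc)
qed

lemma vnorm2_Q_dap_state_le:
  assumes "\<And>t. vnorm2 n (\<lambda>r. mv m B (disturbance_action n H M w t) r + w t r) \<le> \<delta>"
  shows "vnorm2 n (mv n Q (dap_state n m A B K H M w t)) \<le> \<kappa> * \<delta> / \<gamma>"
proof (rule le_div_of_contraction[OF gamma_pos gamma_le_1])
  have "0 \<le> \<delta>" using assms order_trans[OF vnorm2_nonneg] by blast
  then show "vnorm2 n (mv n Q (dap_state n m A B K H M w 0)) \<le> \<kappa> * \<delta> / \<gamma>"
    using kappa_ge_1 gamma_pos by simp
next
  fix t
  let ?x = "dap_state n m A B K H M w t"
  let ?d = "\<lambda>r. mv m B (disturbance_action n H M w t) r + w t r"
  have "vnorm2 n (mv n Q (dap_state n m A B K H M w (Suc t)))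
      = vnorm2 n (\<lambda>i. mv n Q (mv n (AK m A B K) ?x) i + mv n Q ?d i)"
    by (simp only: dap_state_Suc mv_add)
  also have "\<dots> \<le> (1 - \<gamma>) * vnorm2 n (mv n Q ?x) + \<kappa> * vnorm2 n ?d"
    by (rule order_trans[OF vnorm2_add_le add_mono[OF vnorm2_Q_AK_le vnorm2_mv_le_mnorm2[OF norm_Q]]])
  also have "\<dots> \<le> (1 - \<gamma>) * vnorm2 n (mv n Q ?x) + \<kappa> * \<delta>"
    using kappa_ge_1 assms by (intro add_left_mono mult_left_mono) auto
  finally show "vnorm2 n (mv n Q (dap_state n m A B K H M w (Suc t)))
      \<le> (1 - \<gamma>) * vnorm2 n (mv n Q ?x) + \<kappa> * \<delta>" .
qed

lemma vnorm2_closed_loop_tail_le: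
  assumes "\<And>t. vnorm2 n (\<lambda>r. mv m B (disturbance_action n H M w t) r + w t r) \<le> \<delta>"
  shows "vnorm2 n (mv n (mpow n (AK m A B K) H) (state_shift n m A B K H M w t))
           \<le> \<kappa>\<^sup>2 * (1 - \<gamma>)^H * \<delta> / \<gamma>"
proof -
  have "vnorm2 n (mv n Q (state_shift n m A B K H M w t)) \<le> \<kappa> * \<delta> / \<gamma>"
    using vnorm2_Q_dap_state_le[OF assms] vnorm2_Q_dap_state_le[OF assms, of 0]
    by (simp add: state_shift_def)
  then have "vnorm2 n (mv n (mpow n (AK m A B K) H) (state_shift n m A B K H M w t))
      \<le> \<kappa> * (1 - \<gamma>)^H * (\<kappa> * \<delta> / \<gamma>)"
    using kappa_ge_1 gamma_le_1 by (intro order_trans[OF vnorm2_mpow_AK_le] mult_left_mono) auto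
  then show ?thesis
    by (simp add: power2_eq_square mult_ac)
qed

end

text \<open>The constant \<open>c\<^sub>1\<close>, as a polynomial in
\<open>\<parallel>D\<^sub>x\<parallel>\<^sub>\<infinity>, \<parallel>D\<^sub>u\<parallel>\<^sub>\<infinity>, \<kappa>, \<kappa>\<^sub>B, \<gamma>\<^sup>-\<^sup>1, w\<close> in this order.\<close>
definition tail_coeff :: "real \<Rightarrow> real \<Rightarrow> real \<Rightarrow> real \<Rightarrow> real \<Rightarrow> real \<Rightarrow> real" where
  "tail_coeff X U \<kappa> \<kappa>\<^sub>B g w = 3 * (1 + X + U * \<kappa>) * \<kappa>^5 * \<kappa>\<^sub>B * g\<^sup>2 * w"

lemma is_poly6_tail_coeff: "is_poly6 tail_coeff"
  unfolding is_poly6_def tail_coeff_def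
  by (intro exI[of _ "{(0, 0, 5, 1, 2, 1), (1, 0, 5, 1, 2, 1), (0, 1, 6, 1, 2, 1)}"] exI[of _ "\<lambda>_. 3"])
    (simp add: algebra_simps numeral_eq_Suc)

lemma tail_coeff_pos:
  "0 \<le> X \<Longrightarrow> 0 \<le> U \<Longrightarrow> 0 < \<kappa> \<Longrightarrow> 0 < \<kappa>\<^sub>B \<Longrightarrow> 0 < g \<Longrightarrow> 0 < w \<Longrightarrow> 0 < tail_coeff X U \<kappa> \<kappa>\<^sub>B g w"
  unfolding tail_coeff_def by (simp add: add_pos_nonneg)

text \<open>The horizon condition of the theorem enters only through this consequence; the factor
\<open>H\<close> in \<open>\<epsilon>\<^sub>1\<close> is then slack.\<close>
lemma one_le_horizon:
  assumes "1 \<le> \<kappa>" "0 < \<gamma>" "\<gamma> < 1" "ln (2 * \<kappa>\<^sup>2) / ln (1 / (1 - \<gamma>)) \<le> real H"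
  shows "1 \<le> H"
proof -
  have "1 \<le> \<kappa>\<^sup>2" using assms(1) by (simp add: one_le_power)
  then have "0 < ln (2 * \<kappa>\<^sup>2) / ln (1 / (1 - \<gamma>))"
    using assms(2,3) by (intro divide_pos_pos ln_gt_zero) auto
  then show ?thesis using assms(4) by simp
qed

lemma dap_tail_output_bounds:
  fixes t kx ku :: nat and Dx Du :: mat
  assumes "strongly_stable n m A B K \<kappa> \<gamma>" "\<forall>k. M k \<in> param_set n m H \<kappa> \<gamma>"
    and "\<forall>k. vnorm_inf n (w k) \<le> wbar" "0 \<le> wbar" "1 \<le> n" "1 \<le> m" "1 \<le> H"
  defines "y \<equiv> mv n (mpow n (AK m A B K) H) (state_shift n m A B K H M w t)"
    and "\<epsilon> \<equiv> tail_coeff (mnorm_inf kx n Dx) (mnorm_inf ku m Du) \<kappa> (max (mnorm2 n m B) 1) (1 / \<gamma>) wbar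
                * real n * sqrt (real m) * real H * (1 - \<gamma>)^H"
  shows "vnorm_inf kx (mv n Dx y) \<le> \<epsilon> \<and> vnorm_inf ku (mv m Du (mv n K y)) \<le> \<epsilon>"
proof -
  obtain Q Qi L where "strong_stability_certificate n m A B K Q Qi L \<kappa> \<gamma>"
    using assms(1) by (rule strongly_stableE)
  then interpret strong_stability_certificate n m A B K Q Qi L \<kappa> \<gamma> .
  define X U \<kappa>\<^sub>B where "X = mnorm_inf kx n Dx" and "U = mnorm_inf ku m Du" and "\<kappa>\<^sub>B = max (mnorm2 n m B) 1"
  define T where "T = \<kappa>\<^sup>2 * (1 - \<gamma>)^H * (3 * real n * sqrt (real m) * \<kappa>\<^sub>B * \<kappa>^3 * wbar / \<gamma>) / \<gamma>"
  have y: "vnorm2 n y \<le> T"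
    unfolding y_def T_def \<kappa>\<^sub>B_def using assms kappa_ge_1 gamma_pos gamma_le_1
    by (intro vnorm2_closed_loop_tail_le vnorm2_closed_loop_input_le) auto
  have "0 \<le> X" "0 \<le> U" "0 \<le> T"
    using vnorm2_nonneg y unfolding X_def U_def by (auto simp: mnorm_inf_nonneg intro: order_trans)
  have \<epsilon>: "\<epsilon> = (1 + X + U * \<kappa>) * real H * T"
    unfolding \<epsilon>_def T_def X_def U_def \<kappa>\<^sub>B_def tail_coeff_def
    by (simp add: field_simps power2_eq_square numeral_eq_Suc)
  have "vnorm_inf kx (mv n Dx y) \<le> X * T"
    using vnorm_inf_mv_le[of kx n Dx y] mult_left_mono[OF y \<open>0 \<le> X\<close>] unfolding X_def by linarith
  moreover have "vnorm_inf ku (mv m Du (mv n K y)) \<le> U * \<kappa> * T"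
  proof -
    have "vnorm2 m (mv n K y) \<le> \<kappa> * T"
      by (rule order_trans[OF vnorm2_mv_le_mnorm2[OF norm_K] mult_left_mono[OF y]]) (use kappa_ge_1 in simp)
    then show ?thesis
      using vnorm_inf_mv_le[of ku m Du "mv n K y"] mult_left_mono[of _ _ U] \<open>0 \<le> U\<close>
      unfolding U_def by (fastforce simp: mult.assoc)
  qed
  moreover have "X * T \<le> \<epsilon>" "U * \<kappa> * T \<le> \<epsilon>"
  proof -
    have "0 \<le> U * \<kappa>" using \<open>0 \<le> U\<close> kappa_ge_1 by simp
    moreover have "1 + X + U * \<kappa> \<le> (1 + X + U * \<kappa>) * real H"
      using \<open>0 \<le> X\<close> \<open>0 \<le> U * \<kappa>\<close> assms(7) by (simp add: mult_le_cancel_left1)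
    ultimately have "X \<le> (1 + X + U * \<kappa>) * real H" "U * \<kappa> \<le> (1 + X + U * \<kappa>) * real H"
      using \<open>0 \<le> X\<close> by linarith+
    then show "X * T \<le> \<epsilon>" "U * \<kappa> * T \<le> \<epsilon>"
      unfolding \<epsilon> using \<open>0 \<le> T\<close> by (auto intro: mult_right_mono)
  qed
  ultimately show ?thesis by linarith
qed

theorem lemma1:
  shows "\<exists>P. is_poly6 P \<and>
    (\<forall>(n::nat) (m::nat) (kx::nat) (ku::nat) (A::mat) (B::mat) (Dx::mat) (Du::mat) (K::mat)
       (\<kappa>::real) (\<gamma>::real) (wbar::real) (H::nat) (M::nat \<Rightarrow> nat \<Rightarrow> mat).
      1 \<le> n \<and> 1 \<le> m \<and> 0 < \<gamma> \<and> \<gamma> < 1 \<and> 0 < wbar \<and>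
      strongly_stable n m A B K \<kappa> \<gamma> \<and>
      (\<forall>k. M k \<in> param_set n m H \<kappa> \<gamma>) \<and>
      real H \<ge> ln (2 * \<kappa>\<^sup>2) / ln (1 / (1 - \<gamma>))
      \<longrightarrow>
      (let c1 = P (mnorm_inf kx n Dx) (mnorm_inf ku m Du) \<kappa> (max (mnorm2 n m B) 1) (1 / \<gamma>) wbar;
           \<epsilon>1 = c1 * real n * sqrt (real m) * real H * (1 - \<gamma>)^H
       in 0 < c1 \<and>
          (\<forall>(w::nat \<Rightarrow> vec) (t::nat). (\<forall>k. vnorm_inf n (w k) \<le> wbar) \<longrightarrow>
             vnorm_inf kx (mv n Dx (mv n (mpow n (AK m A B K) H)
                 (state_shift n m A B K H M w t))) \<le> \<epsilon>1 \<and>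
             vnorm_inf ku (mv m Du (mv n K (mv n (mpow n (AK m A B K) H)
                 (state_shift n m A B K H M w t)))) \<le> \<epsilon>1)))"
  unfolding Let_def
  by (intro exI[of _ tail_coeff] conjI is_poly6_tail_coeff allI impI; elim conjE; frule strongly_stable_kappa_ge_1)
    (auto intro!: tail_coeff_pos dap_tail_output_bounds[THEN conjunct1] dap_tail_output_bounds[THEN conjunct2]
      intro: one_le_horizon simp: mnorm_inf_nonneg)

end
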